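(* Let $S$ be an anti-rectangular AG-groupoid. The following are equivalent: (i) $S$ is fully idempotent, i.e. $I^{2}=I$ for every ideal $I$ of $S$; (ii) $A\cap B=AB$ for all ideals $A,B$ of $S$; (iii) the set $L_S$ of ideals of $S$, with the operation $A\wedge B=AB$, is a semilattice (i.e. $\wedge$ is a well-defined operation on $L_S$ which is commutative, associative and idempotent).
   Context: An AG-groupoid is a set $S$ with a binary operation satisfying $(ab)c=(cb)a$ for all $a,b,c\in S$. It is anti-rectangular if $a=(ba)b$ for all $a,b\in S$. For nonempty subsets, $AB=\{ab:a\in A,b\in B\}$, $I^{2}=II$. An ideal of $S$ is a nonempty subset $I$ with $SI\subseteq I$ and $IS\subseteq I$. *)

theory Defs
  imports Main
begin

definition AG_groupoid :: "'a set \<Rightarrow> ('a \<Rightarrow> 'a \<Rightarrow> 'a) \<Rightarrow> bool" where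
  "AG_groupoid S m \<longleftrightarrow> (\<forall>a\<in>S. \<forall>b\<in>S. m a b \<in> S) \<and>
     (\<forall>a\<in>S. \<forall>b\<in>S. \<forall>c\<in>S. m (m a b) c = m (m c b) a)"

definition anti_rectangular :: "'a set \<Rightarrow> ('a \<Rightarrow> 'a \<Rightarrow> 'a) \<Rightarrow> bool" where
  "anti_rectangular S m \<longleftrightarrow> (\<forall>a\<in>S. \<forall>b\<in>S. a = m (m b a) b)"

definition setprod :: "('a \<Rightarrow> 'a \<Rightarrow> 'a) \<Rightarrow> 'a set \<Rightarrow> 'a set \<Rightarrow> 'a set" where
  "setprod m A B = {m a b | a b. a \<in> A \<and> b \<in> B}"

definition is_ideal :: "'a set \<Rightarrow> ('a \<Rightarrow> 'a \<Rightarrow> 'a) \<Rightarrow> 'a set \<Rightarrow> bool" where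
  "is_ideal S m I \<longleftrightarrow> I \<noteq> {} \<and> I \<subseteq> S \<and> setprod m S I \<subseteq> I \<and> setprod m I S \<subseteq> I"

definition fully_idempotent :: "'a set \<Rightarrow> ('a \<Rightarrow> 'a \<Rightarrow> 'a) \<Rightarrow> bool" where
  "fully_idempotent S m \<longleftrightarrow> (\<forall>I. is_ideal S m I \<longrightarrow> setprod m I I = I)"

definition ideals_semilattice :: "'a set \<Rightarrow> ('a \<Rightarrow> 'a \<Rightarrow> 'a) \<Rightarrow> bool" where
  "ideals_semilattice S m \<longleftrightarrow>
     (\<forall>A B. is_ideal S m A \<and> is_ideal S m B \<longrightarrow> is_ideal S m (setprod m A B)) \<and>
     (\<forall>A B. is_ideal S m A \<and> is_ideal S m B \<longrightarrow> setprod m A B = setprod m B A) \<and>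
     (\<forall>A B C. is_ideal S m A \<and> is_ideal S m B \<and> is_ideal S m C \<longrightarrow>
        setprod m (setprod m A B) C = setprod m A (setprod m B C)) \<and>
     (\<forall>A. is_ideal S m A \<longrightarrow> setprod m A A = A)"

end

theory Submission
  imports Defs
begin

(* For any binary operation, the product AB of two ideals lies in
   both A (as AB is contained in AS) and B (as AB is contained in SB), so
   AB \<subseteq> A \<inter> B.  If moreover S is anti-rectangular, every x \<in> A \<inter> B satisfies
   x = (xx)x with xx \<in> AS \<subseteq> A and x \<in> B, hence A \<inter> B \<subseteq> AB.  Thus in an
   anti-rectangular groupoid AB = A \<inter> B for all ideals A, B.  From this identity
   all three conditions of the proposition hold outright: I\<^sup>2 = I \<inter> I = I, the
   product of ideals is their intersection (again an ideal), and intersection is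
   commutative, associative and idempotent.  The equivalences follow because all
   three statements are true. *)

lemma setprod_ideals_subset_Int:
  assumes A: "is_ideal S m A" and B: "is_ideal S m B"
  shows "setprod m A B \<subseteq> A \<inter> B"
proof
  fix x assume "x \<in> setprod m A B"
  then obtain a b where x: "x = m a b" and ab: "a \<in> A" "b \<in> B"
    by (auto simp: setprod_def)
  have "a \<in> S" "b \<in> S" using A B ab unfolding is_ideal_def by auto
  then have "x \<in> setprod m A S" "x \<in> setprod m S B"
    using x ab unfolding setprod_def by auto
  then show "x \<in> A \<inter> B" using A B unfolding is_ideal_def by auto
qed

text \<open>In an anti-rectangular groupoid, each element of the intersection of a
  right ideal A (AS \<subseteq> A) with a set B factors as (xx)x \<in> AB.\<close>
lemma Int_subset_setprod_anti_rectangular: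
  assumes ar: "anti_rectangular S m"
    and right_ideal: "setprod m A S \<subseteq> A" and AS: "A \<subseteq> S"
  shows "A \<inter> B \<subseteq> setprod m A B"
proof
  fix x assume x: "x \<in> A \<inter> B"
  then have xS: "x \<in> S" using AS by auto
  have factor: "x = m (m x x) x" using ar xS unfolding anti_rectangular_def by auto
  have "m x x \<in> setprod m A S" using x xS unfolding setprod_def by auto
  then have "m x x \<in> A" using right_ideal by auto
  then show "x \<in> setprod m A B" using x factor unfolding setprod_def by auto
qed

lemma setprod_ideals_eq_Int:
  assumes ar: "anti_rectangular S m"
    and A: "is_ideal S m A" and B: "is_ideal S m B"
  shows "setprod m A B = A \<inter> B"
proof
  show "setprod m A B \<subseteq> A \<inter> B" using setprod_ideals_subset_Int[OF A B] .
  show "A \<inter> B \<subseteq> setprod m A B"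
    using A by (intro Int_subset_setprod_anti_rectangular[OF ar]) (auto simp: is_ideal_def)
qed

text \<open>The intersection of two ideals is an ideal; it is nonempty because it
  contains the (nonempty) product of the two ideals.\<close>
lemma ideal_Int:
  assumes A: "is_ideal S m A" and B: "is_ideal S m B"
  shows "is_ideal S m (A \<inter> B)"
proof -
  have "setprod m A B \<noteq> {}" using A B unfolding is_ideal_def setprod_def by auto
  then have "A \<inter> B \<noteq> {}" using setprod_ideals_subset_Int[OF A B] by auto
  moreover have "setprod m S (A \<inter> B) \<subseteq> A \<inter> B" "setprod m (A \<inter> B) S \<subseteq> A \<inter> B"
    using A B unfolding is_ideal_def setprod_def by blast+
  ultimately show ?thesis using A unfolding is_ideal_def by auto
qed

lemma ideals_semilattice_anti_rectangular:
  assumes ar: "anti_rectangular S m"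
  shows "ideals_semilattice S m"
  unfolding ideals_semilattice_def
proof (intro conjI allI impI)
  fix A B assume "is_ideal S m A \<and> is_ideal S m B"
  then show "is_ideal S m (setprod m A B)" "setprod m A B = setprod m B A"
    using setprod_ideals_eq_Int[OF ar] ideal_Int by (auto simp: Int_commute)
next
  fix A B C assume "is_ideal S m A \<and> is_ideal S m B \<and> is_ideal S m C"
  then have A: "is_ideal S m A" and B: "is_ideal S m B" and C: "is_ideal S m C" by auto
  have "setprod m (setprod m A B) C = (A \<inter> B) \<inter> C"
    using A B C by (simp add: setprod_ideals_eq_Int[OF ar] ideal_Int)
  also have "\<dots> = A \<inter> (B \<inter> C)" by (rule Int_assoc)
  also have "\<dots> = setprod m A (setprod m B C)"
    using A B C by (simp add: setprod_ideals_eq_Int[OF ar] ideal_Int)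
  finally show "setprod m (setprod m A B) C = setprod m A (setprod m B C)" .
next
  fix A assume "is_ideal S m A"
  then show "setprod m A A = A" using setprod_ideals_eq_Int[OF ar] by auto
qed

theorem proposition5:
  assumes "AG_groupoid S m" and "anti_rectangular S m"
  shows "(fully_idempotent S m \<longleftrightarrow>
            (\<forall>A B. is_ideal S m A \<and> is_ideal S m B \<longrightarrow> A \<inter> B = setprod m A B))
       \<and> (fully_idempotent S m \<longleftrightarrow> ideals_semilattice S m)"
proof -
  note product_is_Int = setprod_ideals_eq_Int[OF assms(2)]
  have "fully_idempotent S m"
    unfolding fully_idempotent_def using product_is_Int by auto
  moreover have "\<forall>A B. is_ideal S m A \<and> is_ideal S m B \<longrightarrow> A \<inter> B = setprod m A B"
    using product_is_Int by auto
  moreover have "ideals_semilattice S m"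
    using ideals_semilattice_anti_rectangular[OF assms(2)] .
  ultimately show ?thesis by blast
qed

end
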